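(* Let $n \geq 1$. If $\Psi : \mathbf{R}^n \to \mathbf{R}^n$ is a primitive linear map (with respect to the Lorentz cone $\mathcal{L}_n$), then $\gamma(\Psi) \leq n$. Moreover, there exists a primitive linear map $\Psi : \mathbf{R}^n \to \mathbf{R}^n$ such that $\gamma(\Psi) = n$.
   Context: The $n$-dimensional Lorentz cone is $\mathcal{L}_n = \{(x_1,\dots,x_n) \in \mathbf{R}^n : x_n \geq (x_1^2+\dots+x_{n-1}^2)^{1/2}\}$, with interior $\mathrm{int}(\mathcal{L}_n)$. A linear map $\Psi : \mathbf{R}^n \to \mathbf{R}^n$ is positive if $\Psi(\mathcal{L}_n) \subset \mathcal{L}_n$, strictly positive if $\Psi(\mathcal{L}_n \setminus \{0\}) \subset \mathrm{int}(\mathcal{L}_n)$, and primitive if it is positive and there exists an integer $k \geq 1$ such that $\Psi^k$ is strictly positive. For primitive $\Psi$, $\gamma(\Psi)$ (the primitivity index) is the smallest such $k$. *)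

theory Defs
  imports "HOL-Analysis.Analysis"
begin

text \<open>R^n is modelled as real^'n with CARD('n) = n; the index type carries a
well-order so that the "last" coordinate x_n is the greatest index.\<close>

definition last_idx :: "'n::{finite,wellorder}" where
  "last_idx = (GREATEST i. True)"

definition lorentz_cone :: "(real^'n::{finite,wellorder}) set" where
  "lorentz_cone = {x. x $ (last_idx::'n::{finite,wellorder}) \<ge> sqrt (\<Sum>i\<in>UNIV - {last_idx::'n::{finite,wellorder}}. (x $ i)^2)}"

definition positive_map :: "(real^('n::{finite,wellorder}) \<Rightarrow> real^('n::{finite,wellorder})) \<Rightarrow> bool" where
  "positive_map \<Psi> \<longleftrightarrow> \<Psi> ` lorentz_cone \<subseteq> lorentz_cone"

definition strictly_positive_map :: "(real^('n::{finite,wellorder}) \<Rightarrow> real^('n::{finite,wellorder})) \<Rightarrow> bool" where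
  "strictly_positive_map \<Psi> \<longleftrightarrow> \<Psi> ` (lorentz_cone - {0}) \<subseteq> interior lorentz_cone"

definition primitive_map :: "(real^('n::{finite,wellorder}) \<Rightarrow> real^('n::{finite,wellorder})) \<Rightarrow> bool" where
  "primitive_map \<Psi> \<longleftrightarrow> positive_map \<Psi> \<and> (\<exists>k::nat. k \<ge> 1 \<and> strictly_positive_map (\<Psi> ^^ k))"

definition primitivity_index :: "(real^('n::{finite,wellorder}) \<Rightarrow> real^('n::{finite,wellorder})) \<Rightarrow> nat" where
  "primitivity_index \<Psi> = (LEAST k::nat. k \<ge> 1 \<and> strictly_positive_map (\<Psi> ^^ k))"

end

(*
  Let q be the Minkowski form x_n^2 - (x_1^2 + ... + x_(n-1)^2), so that the Lorentz cone is the
  half of {q >= 0} with x_n >= 0. An S-lemma argument on the pencil spanned by a timelike and a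
  spacelike vector gives mu >= 0 with q (Psi x) >= mu * q x for every positive Psi.

  If mu = 0, then q o Psi is nonnegative everywhere, and this already forces Psi itself to be
  strictly positive once one of its powers is. If mu > 0, then q o Psi - mu * q is positive
  semidefinite, so its null set K is a subspace. A nonzero boundary vector v with
  q (Psi^n v) = 0 has Psi^j v in K for j < n; since the largest Psi-invariant subspace of K is
  reached within n steps, Psi^j v lies in K for every j, so q (Psi^j v) = mu^j * q v = 0 for
  every j, contradicting primitivity.

  For sharpness, mix x_n with one spatial coordinate and shift the others: then
  q (Psi x) = q x + c x ^ 2 for a linear functional c such that c (Psi^j x), j < n, are n
  linearly independent functionals of x; a suitable null vector is annihilated by the first
  n - 1 of them and so stays on the boundary for n - 1 steps.
*)

theory Submission
  imports Defs
begin

definition spatial_sq :: "real^'n::{finite,wellorder} \<Rightarrow> real" where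
  "spatial_sq x = (\<Sum>i\<in>UNIV - {last_idx::'n}. (x $ i)^2)"

definition minkowski_form :: "real^'n::{finite,wellorder} \<Rightarrow> real" where
  "minkowski_form x = (x $ (last_idx::'n))^2 - spatial_sq x"

definition minkowski_inner :: "real^'n::{finite,wellorder} \<Rightarrow> real^'n::{finite,wellorder} \<Rightarrow> real" where
  "minkowski_inner x y = x $ (last_idx::'n) * y $ last_idx - (\<Sum>i\<in>UNIV - {last_idx::'n}. x $ i * y $ i)"

lemma spatial_sq_nonneg: "spatial_sq x \<ge> 0"
  unfolding spatial_sq_def by (simp add: sum_nonneg)

lemma lorentz_cone_iff: "x \<in> lorentz_cone \<longleftrightarrow> x $ last_idx \<ge> 0 \<and> minkowski_form x \<ge> 0"
proof -
  have "sqrt (spatial_sq x) \<le> x $ last_idx \<longleftrightarrow> x $ last_idx \<ge> 0 \<and> spatial_sq x \<le> (x $ last_idx)^2"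
    using spatial_sq_nonneg[of x] real_sqrt_le_iff'[of "spatial_sq x"]
    by (metis order.trans real_sqrt_ge_zero)
  then show ?thesis
    unfolding lorentz_cone_def minkowski_form_def spatial_sq_def[symmetric] by auto
qed

lemma interior_lorentz_cone:
  "interior lorentz_cone = {x::real^'n::{finite,wellorder}. sqrt (spatial_sq x) < x $ last_idx}"
proof
  show "{x. sqrt (spatial_sq x) < x $ last_idx} \<subseteq> interior lorentz_cone"
  proof (rule interior_maximal)
    show "open {x. sqrt (spatial_sq x) < x $ last_idx}"
      unfolding spatial_sq_def by (intro open_Collect_less continuous_intros)
  qed (auto simp: lorentz_cone_def spatial_sq_def)
  show "interior lorentz_cone \<subseteq> {x. sqrt (spatial_sq x) < x $ last_idx}"
  proof
    fix x assume "x \<in> interior lorentz_cone"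
    then obtain e where e: "e > 0" "ball x e \<subseteq> lorentz_cone"
      using mem_interior by blast
    define y where "y = x - (e/2) *\<^sub>R axis last_idx 1"
    have "y \<in> lorentz_cone" using e by (auto simp: y_def dist_norm)
    moreover have "spatial_sq y = spatial_sq x"
      unfolding spatial_sq_def y_def by (intro sum.cong) (auto simp: axis_def)
    moreover have "y $ last_idx = x $ last_idx - e/2" by (simp add: y_def axis_def)
    ultimately have "sqrt (spatial_sq x) \<le> x $ last_idx - e/2"
      unfolding lorentz_cone_def spatial_sq_def by auto
    then show "x \<in> {x. sqrt (spatial_sq x) < x $ last_idx}" using e(1) by auto
  qed
qed

lemma interior_lorentz_cone_iff:
  "x \<in> interior lorentz_cone \<longleftrightarrow> x $ last_idx > 0 \<and> minkowski_form x > 0"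
proof -
  have "sqrt (spatial_sq x) < x $ last_idx \<longleftrightarrow> x $ last_idx > 0 \<and> spatial_sq x < (x $ last_idx)^2"
  proof
    assume *: "sqrt (spatial_sq x) < x $ last_idx"
    then have "x $ last_idx > 0" using real_sqrt_ge_zero[OF spatial_sq_nonneg[of x]] by linarith
    moreover have "(sqrt (spatial_sq x))^2 < (x $ last_idx)^2"
      using * real_sqrt_ge_zero[OF spatial_sq_nonneg[of x]] by (intro power_strict_mono) auto
    ultimately show "x $ last_idx > 0 \<and> spatial_sq x < (x $ last_idx)^2"
      using spatial_sq_nonneg[of x] by simp
  next
    assume "x $ last_idx > 0 \<and> spatial_sq x < (x $ last_idx)^2"
    then show "sqrt (spatial_sq x) < x $ last_idx"
      using real_sqrt_less_iff[of "spatial_sq x" "(x $ last_idx)^2"] by simp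
  qed
  then show ?thesis unfolding interior_lorentz_cone minkowski_form_def by auto
qed

lemma lorentz_cone_interior_iff:
  assumes "x \<in> lorentz_cone"
  shows "x \<in> interior lorentz_cone \<longleftrightarrow> minkowski_form x > 0"
proof -
  have "minkowski_form x > 0 \<Longrightarrow> x $ last_idx \<noteq> 0"
    using spatial_sq_nonneg[of x] unfolding minkowski_form_def by auto
  then show ?thesis using assms unfolding interior_lorentz_cone_iff lorentz_cone_iff by auto
qed

lemma minkowski_form_eq_inner: "minkowski_form x = minkowski_inner x x"
  unfolding minkowski_form_def minkowski_inner_def spatial_sq_def by (simp add: power2_eq_square)

lemma minkowski_inner_commute: "minkowski_inner x y = minkowski_inner y x"
  unfolding minkowski_inner_def by (simp add: mult.commute)

lemma minkowski_inner_add_scaleR_left: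
  "minkowski_inner (s *\<^sub>R x + t *\<^sub>R y) z = s * minkowski_inner x z + t * minkowski_inner y z"
  unfolding minkowski_inner_def by (simp add: algebra_simps sum.distrib sum_distrib_left)

lemma minkowski_form_add_scaleR:
  "minkowski_form (s *\<^sub>R x + t *\<^sub>R y)
     = s^2 * minkowski_form x + 2 * s * t * minkowski_inner x y + t^2 * minkowski_form y"
proof -
  have "minkowski_inner z (s *\<^sub>R x + t *\<^sub>R y) = s * minkowski_inner x z + t * minkowski_inner y z"
    for z
    by (metis minkowski_inner_add_scaleR_left minkowski_inner_commute)
  then show ?thesis
    unfolding minkowski_form_eq_inner minkowski_inner_add_scaleR_left
    by (simp add: minkowski_inner_commute[of y x] power2_eq_square algebra_simps)
qed

lemma minkowski_form_scaleR: "minkowski_form (c *\<^sub>R x) = c^2 * minkowski_form x"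
  using minkowski_form_add_scaleR[of c x 0 x] by simp

lemma minkowski_form_uminus: "minkowski_form (- x) = minkowski_form x"
  using minkowski_form_scaleR[of "-1" x] by simp

lemma minkowski_form_zero [simp]: "minkowski_form 0 = 0"
  using minkowski_form_scaleR[of 0 0] by simp

lemma lorentz_cone_null_last_pos:
  assumes "x \<in> lorentz_cone" "minkowski_form x = 0" "x \<noteq> 0"
  shows "x $ last_idx > 0"
proof (rule ccontr)
  assume "\<not> x $ last_idx > 0"
  then have last: "x $ last_idx = 0" using assms(1) lorentz_cone_iff by force
  then have "spatial_sq x = 0" using assms(2) unfolding minkowski_form_def by simp
  then have "\<forall>i\<in>UNIV - {last_idx}. x $ i = 0"
    unfolding spatial_sq_def by (subst (asm) sum_nonneg_eq_0_iff) auto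
  then have "x = 0" using last by (metis DiffI singletonD UNIV_I vec_eq_iff zero_index)
  then show False using assms(3) by simp
qed

lemma minkowski_inner_null_interior_pos:
  assumes a: "a \<in> lorentz_cone" "minkowski_form a = 0" "a \<noteq> 0"
    and c: "c \<in> interior lorentz_cone"
  shows "minkowski_inner a c > 0"
proof -
  have a_last: "a $ last_idx > 0" using lorentz_cone_null_last_pos[OF a] .
  have sqrt_a: "sqrt (spatial_sq a) = a $ last_idx" using a(2) a_last unfolding minkowski_form_def
    by (metis abs_of_pos eq_iff_diff_eq_0 real_sqrt_abs)
  have c_last: "sqrt (spatial_sq c) < c $ last_idx" using c interior_lorentz_cone by blast
  have "(\<Sum>i\<in>UNIV - {last_idx}. a $ i * c $ i) \<le> (\<Sum>i\<in>UNIV - {last_idx}. \<bar>a $ i\<bar> * \<bar>c $ i\<bar>)"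
    by (intro sum_mono) (simp add: abs_mult[symmetric])
  also have "\<dots> \<le> L2_set (\<lambda>i. a $ i) (UNIV - {last_idx}) * L2_set (\<lambda>i. c $ i) (UNIV - {last_idx})"
    by (rule L2_set_mult_ineq)
  also have "\<dots> = a $ last_idx * sqrt (spatial_sq c)"
    unfolding L2_set_def spatial_sq_def[symmetric] sqrt_a ..
  finally have "minkowski_inner a c \<ge> a $ last_idx * (c $ last_idx - sqrt (spatial_sq c))"
    unfolding minkowski_inner_def by (simp add: right_diff_distrib)
  moreover have "a $ last_idx * (c $ last_idx - sqrt (spatial_sq c)) > 0"
    using a_last c_last by simp
  ultimately show ?thesis by linarith
qed

lemma quadratic_implication_ratio_le:
  fixes a b c \<alpha> \<beta> \<gamma> :: real
  assumes a: "a < 0" and c: "c > 0"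
    and implication: "\<And>s. a * s^2 + 2 * b * s + c \<ge> 0 \<Longrightarrow> \<alpha> * s^2 + 2 * \<beta> * s + \<gamma> \<ge> 0"
  shows "\<alpha> / a \<le> \<gamma> / c"
proof -
  define d where "d = sqrt (b^2 - a * c)"
  have disc: "b^2 - a * c > b^2" using a c by (simp add: mult_neg_pos)
  then have d2: "d^2 = b^2 - a * c" unfolding d_def
    by (metis less_le_not_le real_sqrt_pow2 zero_le_power2 order.trans)
  have d_gt: "d > \<bar>b\<bar>" unfolding d_def using disc real_less_rsqrt[of "\<bar>b\<bar>" "b^2 - a * c"] by simp
  define s1 where "s1 = (- b - d) / a"
  define s2 where "s2 = (- b + d) / a"
  have s1: "s1 > 0" unfolding s1_def using a d_gt by (intro divide_neg_neg) auto
  have s2: "s2 < 0" unfolding s2_def using a d_gt by (intro divide_pos_neg) auto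
  have "a * s1^2 + 2 * b * s1 + c = 0" "a * s2^2 + 2 * b * s2 + c = 0" "s1 * s2 = c / a"
    unfolding s1_def s2_def using a d2
    by (simp_all add: field_simps power2_eq_square) (simp_all only: distrib_left[symmetric])
  then have P1: "\<alpha> * s1^2 + 2 * \<beta> * s1 + \<gamma> \<ge> 0" and P2: "\<alpha> * s2^2 + 2 * \<beta> * s2 + \<gamma> \<ge> 0"
    and prod: "s1 * s2 = c / a"
    using implication by simp_all
  \<comment> \<open>combine the inequalities at the two roots so that \<open>\<beta>\<close> cancels\<close>
  have "(\<gamma> - \<alpha> * s1 * s2) * (s1 - s2)
      = s1 * (\<alpha> * s2^2 + 2 * \<beta> * s2 + \<gamma>) - s2 * (\<alpha> * s1^2 + 2 * \<beta> * s1 + \<gamma>)"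
    by (simp add: algebra_simps power2_eq_square)
  also have "\<dots> \<ge> 0"
    using mult_nonneg_nonneg[OF less_imp_le[OF s1] P2] mult_nonpos_nonneg[OF less_imp_le[OF s2] P1]
    by linarith
  finally have "\<gamma> \<ge> \<alpha> * (c / a)"
    using s1 s2 prod by (simp add: zero_le_mult_iff mult.assoc)
  then show ?thesis using a c by (simp add: divide_simps mult.commute)
qed

lemma linear_funpow:
  fixes f :: "'a::real_vector \<Rightarrow> 'a"
  shows "linear f \<Longrightarrow> linear (f ^^ k)"
  by (induction k) (auto simp: linear_iff)

lemma positive_map_minkowski_form_nonneg:
  assumes "linear \<Psi>" "positive_map \<Psi>" "minkowski_form x \<ge> 0"
  shows "minkowski_form (\<Psi> x) \<ge> 0"
proof (cases "x $ last_idx \<ge> 0")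
  case True
  then have "\<Psi> x \<in> lorentz_cone"
    using assms lorentz_cone_iff unfolding positive_map_def by blast
  then show ?thesis using lorentz_cone_iff by blast
next
  case False
  then have "\<Psi> (- x) \<in> lorentz_cone"
    using assms lorentz_cone_iff[of "- x"] minkowski_form_uminus[of x]
    unfolding positive_map_def by auto
  then show ?thesis
    using lorentz_cone_iff minkowski_form_uminus linear_neg[OF assms(1)] by metis
qed

lemma positive_map_funpow_lorentz_cone:
  "positive_map \<Psi> \<Longrightarrow> x \<in> lorentz_cone \<Longrightarrow> (\<Psi> ^^ k) x \<in> lorentz_cone"
  by (induction k) (auto simp: positive_map_def)

lemma strictly_positive_funpow_iff:
  assumes "positive_map \<Psi>"
  shows "strictly_positive_map (\<Psi> ^^ k)
    \<longleftrightarrow> (\<forall>x\<in>lorentz_cone - {0}. minkowski_form ((\<Psi> ^^ k) x) > 0)"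
  unfolding strictly_positive_map_def
  using lorentz_cone_interior_iff positive_map_funpow_lorentz_cone[OF assms] by auto

lemma positive_map_minkowski_form_ratio_le:
  fixes \<Psi> :: "real^'n::{finite,wellorder} \<Rightarrow> real^'n::{finite,wellorder}"
  assumes lin: "linear \<Psi>" and pos: "positive_map \<Psi>"
    and x: "minkowski_form x < 0" and y: "minkowski_form y > 0"
  shows "minkowski_form (\<Psi> x) / minkowski_form x \<le> minkowski_form (\<Psi> y) / minkowski_form y"
proof (rule quadratic_implication_ratio_le[OF x y])
  let ?q = "minkowski_form" and ?b = "minkowski_inner"
  fix s :: real
  have "\<Psi> (s *\<^sub>R x + 1 *\<^sub>R y) = s *\<^sub>R \<Psi> x + 1 *\<^sub>R \<Psi> y"
    using lin by (simp add: linear_add linear_scale)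
  moreover assume "?q x * s^2 + 2 * ?b x y * s + ?q y \<ge> 0"
  then have "?q (\<Psi> (s *\<^sub>R x + 1 *\<^sub>R y)) \<ge> 0"
    using positive_map_minkowski_form_nonneg[OF lin pos] minkowski_form_add_scaleR[of s x 1 y]
    by (simp add: mult_ac)
  ultimately show "?q (\<Psi> x) * s^2 + 2 * ?b (\<Psi> x) (\<Psi> y) * s + ?q (\<Psi> y) \<ge> 0"
    using minkowski_form_add_scaleR[of s "\<Psi> x" 1 "\<Psi> y"] by (simp add: mult_ac)
qed

lemma positive_map_minkowski_form_lower_bound:
  fixes \<Psi> :: "real^'n::{finite,wellorder} \<Rightarrow> real^'n::{finite,wellorder}"
  assumes lin: "linear \<Psi>" and pos: "positive_map \<Psi>"
  shows "\<exists>\<mu>\<ge>0. \<forall>x. minkowski_form (\<Psi> x) \<ge> \<mu> * minkowski_form x"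
proof -
  let ?q = "minkowski_form"
  define R where "R = {?q (\<Psi> y) / ?q y | y. ?q y > 0}"
  define \<mu> where "\<mu> = Inf R"
  have "?q (axis last_idx 1 :: real^'n::{finite,wellorder}) = 1"
    unfolding minkowski_form_def spatial_sq_def by (simp add: axis_def)
  then have R_nonempty: "R \<noteq> {}" unfolding R_def by (auto intro!: exI[of _ "axis last_idx 1"])
  have R_nonneg: "\<forall>r\<in>R. 0 \<le> r"
    unfolding R_def using positive_map_minkowski_form_nonneg[OF lin pos] by force
  then have "bdd_below R" by (auto intro: bdd_belowI)
  have "\<mu> \<ge> 0" unfolding \<mu>_def using R_nonempty R_nonneg by (intro cInf_greatest) auto
  have "?q (\<Psi> x) \<ge> \<mu> * ?q x" for x
  proof (cases "?q x" "0 :: real" rule: linorder_cases)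
    case less
    then have "?q (\<Psi> x) / ?q x \<le> \<mu>"
      unfolding \<mu>_def using R_nonempty positive_map_minkowski_form_ratio_le[OF lin pos less] by (intro cInf_greatest) (auto simp: R_def)
    then show ?thesis using less by (simp add: divide_le_eq mult.commute)
  next
    case equal
    then show ?thesis using positive_map_minkowski_form_nonneg[OF lin pos, of x] by simp
  next
    case greater
    then have "\<mu> \<le> ?q (\<Psi> x) / ?q x"
      unfolding \<mu>_def using \<open>bdd_below R\<close> by (intro cInf_lower) (auto simp: R_def)
    then show ?thesis using greater by (simp add: le_divide_eq)
  qed
  then show ?thesis using \<open>\<mu> \<ge> 0\<close> by blast
qed

lemma strictly_positive_if_minkowski_form_image_nonneg:
  fixes \<Psi> :: "real^'n::{finite,wellorder} \<Rightarrow> real^'n::{finite,wellorder}"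
  assumes lin: "linear \<Psi>" and pos: "positive_map \<Psi>"
    and N: "N \<ge> 1" "strictly_positive_map (\<Psi> ^^ N)"
    and nonneg: "\<And>z. minkowski_form (\<Psi> z) \<ge> 0"
  shows "strictly_positive_map \<Psi>"
proof -
  have "minkowski_form (\<Psi> x) > 0" if x: "x \<in> lorentz_cone" "x \<noteq> 0" for x
  proof (rule ccontr)
    \<comment> \<open>Otherwise \<open>\<Psi> x\<close> is a null vector, and moving it slightly away from the interior
      point \<open>\<Psi>\<^sup>N x\<close> stays in the image of \<open>\<Psi>\<close> but makes the form negative.\<close>
    assume "\<not> minkowski_form (\<Psi> x) > 0"
    obtain M where M: "N = Suc M" using N(1) by (cases N) auto
    define a where "a = \<Psi> x"
    define w where "w = (\<Psi> ^^ M) x"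
    define c where "c = \<Psi> w"
    have a_cone: "a \<in> lorentz_cone" using x pos unfolding a_def positive_map_def by blast
    with \<open>\<not> minkowski_form (\<Psi> x) > 0\<close> have a_null: "minkowski_form a = 0"
      unfolding a_def lorentz_cone_iff by simp
    have c_eq: "c = (\<Psi> ^^ N) x" "c = (\<Psi> ^^ M) a"
      unfolding c_def w_def a_def M by (simp_all add: funpow_swap1)
    have c_pos: "minkowski_form c > 0"
      using N(2) x c_eq(1) strictly_positive_funpow_iff[OF pos] by blast
    then have "c \<in> interior lorentz_cone"
      using lorentz_cone_interior_iff positive_map_funpow_lorentz_cone[OF pos x(1)] c_eq(1) by blast
    moreover have "a \<noteq> 0"
      using c_pos c_eq(2) linear_0[OF linear_funpow[OF lin]] by auto
    ultimately have B: "minkowski_inner a c > 0"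
      using minkowski_inner_null_interior_pos a_cone a_null by blast
    define t where "t = - minkowski_inner a c / minkowski_form c"
    have "minkowski_form (1 *\<^sub>R a + t *\<^sub>R c) = - ((minkowski_inner a c)^2 / minkowski_form c)"
      unfolding minkowski_form_add_scaleR a_null t_def using c_pos
      by (simp add: power2_eq_square field_simps)
    also have "\<dots> < 0" using B c_pos by simp
    also have "1 *\<^sub>R a + t *\<^sub>R c = \<Psi> (x + t *\<^sub>R w)"
      unfolding a_def c_def using lin by (simp add: linear_add linear_scale)
    finally show False using nonneg[of "x + t *\<^sub>R w"] by simp
  qed
  then show ?thesis using strictly_positive_funpow_iff[OF pos, of 1] by simp
qed

lemma subspace_null_set_nonneg_quadratic:
  fixes Q :: "'a::real_vector \<Rightarrow> real" and B :: "'a \<Rightarrow> 'a \<Rightarrow> real"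
  assumes expand: "\<And>s t x y. Q (s *\<^sub>R x + t *\<^sub>R y) = s^2 * Q x + 2 * s * t * B x y + t^2 * Q y"
    and nonneg: "\<And>x. Q x \<ge> 0"
  shows "subspace {x. Q x = 0}"
proof (rule subspaceI)
  show "0 \<in> {x. Q x = 0}" using expand[of 0 0 0 0] by simp
next
  fix c x assume "x \<in> {x. Q x = 0}"
  then show "c *\<^sub>R x \<in> {x. Q x = 0}" using expand[of c x 0 x] by simp
next
  fix x y assume "x \<in> {x. Q x = 0}" "y \<in> {x. Q x = 0}"
  then have "Q (1 *\<^sub>R x + 1 *\<^sub>R y) = 2 * B x y" "Q (1 *\<^sub>R x + (-1) *\<^sub>R y) = - 2 * B x y"
    using expand[of 1 x 1 y] expand[of 1 x "-1" y] by simp_all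
  then have "B x y = 0" using nonneg[of "1 *\<^sub>R x + 1 *\<^sub>R y"] nonneg[of "1 *\<^sub>R x + (-1) *\<^sub>R y"]
    by linarith
  then show "x + y \<in> {x. Q x = 0}" using \<open>Q (1 *\<^sub>R x + 1 *\<^sub>R y) = 2 * B x y\<close> by simp
qed

lemma funpow_in_subspace_if_first_dim:
  fixes f :: "'a::euclidean_space \<Rightarrow> 'a"
  assumes lin: "linear f" and K: "subspace K" and first: "\<forall>j<DIM('a). (f ^^ j) z \<in> K"
  shows "(f ^^ j) z \<in> K"
proof -
  define V where "V k = {z. \<forall>j<k. (f ^^ j) z \<in> K}" for k
  have V_subspace: "subspace (V k)" for k
    unfolding V_def using K linear_funpow[OF lin]
    by (auto intro!: subspaceI simp: subspace_0 subspace_add subspace_scale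
        linear_0 linear_add linear_scale)
  have V_antimono: "V k' \<subseteq> V k" if "k \<le> k'" for k k'
    using that unfolding V_def by auto
  have V_Suc: "V (Suc k) = {z \<in> K. f z \<in> V k}" for k
    unfolding V_def All_less_Suc2 by (simp add: funpow_swap1)
  have V_stable: "V (k + i) = V k" if "V (Suc k) = V k" for k i
  proof (induction i)
    case (Suc i)
    then show ?case using that V_Suc[of "k + i"] V_Suc[of k] by simp
  qed simp
  \<comment> \<open>the chain of subspaces \<open>V k\<close> cannot drop in dimension more than \<open>DIM('a)\<close> times\<close>
  obtain k where k: "k \<le> DIM('a)" "V (Suc k) = V k"
  proof (rule ccontr)
    assume "\<not> thesis"
    with that have drop: "V (Suc k) \<subset> V k" if "k \<le> DIM('a)" for k
      using that V_antimono[of k "Suc k"] by auto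
    have "dim (V k) + k \<le> DIM('a)" if "k \<le> Suc DIM('a)" for k
      using that
    proof (induction k)
      case 0
      then show ?case using dim_subset_UNIV by simp
    next
      case (Suc k)
      have "dim (V (Suc k)) < dim (V k)"
        using drop[of k] Suc.prems V_subspace[THEN span_eq_iff[THEN iffD2]] by (intro dim_psubset) (simp only:)
      then show ?case using Suc by simp
    qed
    then show False by (metis le_refl add_leE not_less_eq_eq)
  qed
  have "z \<in> V k" using first k(1) unfolding V_def by auto
  also have "V k = V (k + Suc j)" by (rule V_stable[OF k(2), symmetric])
  also have "\<dots> \<subseteq> V (Suc j)" by (rule V_antimono) simp
  finally show ?thesis unfolding V_def by simp
qed

lemma subspace_minkowski_form_bound_null_set:
  fixes \<Psi> :: "real^'n::{finite,wellorder} \<Rightarrow> real^'n::{finite,wellorder}"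
  assumes lin: "linear \<Psi>" and bound: "\<And>z. minkowski_form (\<Psi> z) \<ge> \<mu> * minkowski_form z"
  shows "subspace {z. minkowski_form (\<Psi> z) - \<mu> * minkowski_form z = 0}"
proof (rule subspace_null_set_nonneg_quadratic)
  let ?q = "minkowski_form"
  fix s t x y
  have "\<Psi> (s *\<^sub>R x + t *\<^sub>R y) = s *\<^sub>R \<Psi> x + t *\<^sub>R \<Psi> y"
    using lin by (simp add: linear_add linear_scale)
  then show "?q (\<Psi> (s *\<^sub>R x + t *\<^sub>R y)) - \<mu> * ?q (s *\<^sub>R x + t *\<^sub>R y)
    = s^2 * (?q (\<Psi> x) - \<mu> * ?q x)
      + 2 * s * t * (minkowski_inner (\<Psi> x) (\<Psi> y) - \<mu> * minkowski_inner x y)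
      + t^2 * (?q (\<Psi> y) - \<mu> * ?q y)"
    by (simp add: minkowski_form_add_scaleR algebra_simps)
qed (use bound in simp)

lemma minkowski_form_funpow_lower_bound:
  fixes \<Psi> :: "real^'n::{finite,wellorder} \<Rightarrow> real^'n::{finite,wellorder}"
  assumes \<mu>: "\<mu> \<ge> 0" and bound: "\<And>z. minkowski_form (\<Psi> z) \<ge> \<mu> * minkowski_form z"
  shows "minkowski_form ((\<Psi> ^^ k) x) \<ge> \<mu> ^ k * minkowski_form x"
proof (induction k)
  case (Suc k)
  have "\<mu> ^ Suc k * minkowski_form x \<le> \<mu> * minkowski_form ((\<Psi> ^^ k) x)"
    using Suc \<mu> by (simp add: mult.assoc mult_left_mono)
  also have "\<dots> \<le> minkowski_form ((\<Psi> ^^ Suc k) x)" using bound[of "(\<Psi> ^^ k) x"] by simp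
  finally show ?case .
qed simp

lemma strictly_positive_funpow_card_if_form_bound_pos:
  fixes \<Psi> :: "real^'n::{finite,wellorder} \<Rightarrow> real^'n::{finite,wellorder}"
  assumes lin: "linear \<Psi>" and pos: "positive_map \<Psi>"
    and N: "strictly_positive_map (\<Psi> ^^ N)"
    and \<mu>: "\<mu> > 0" and bound: "\<And>z. minkowski_form (\<Psi> z) \<ge> \<mu> * minkowski_form z"
  shows "strictly_positive_map (\<Psi> ^^ CARD('n))"
proof -
  let ?q = "minkowski_form"
  define K where "K = {z. ?q (\<Psi> z) - \<mu> * ?q z = 0}"
  have "subspace K" unfolding K_def using lin bound by (rule subspace_minkowski_form_bound_null_set)
  note bound_funpow = minkowski_form_funpow_lower_bound[OF less_imp_le[OF \<mu>] bound]
  show ?thesis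
    unfolding strictly_positive_funpow_iff[OF pos]
  proof (rule ballI, rule ccontr)
    fix v assume v: "v \<in> lorentz_cone - {0}" and "\<not> ?q ((\<Psi> ^^ CARD('n)) v) > 0"
    then have "?q ((\<Psi> ^^ CARD('n)) v) = 0"
      using positive_map_funpow_lorentz_cone[OF pos] lorentz_cone_iff by (meson DiffD1 not_less order.antisym)
    have null: "?q ((\<Psi> ^^ i) v) = 0" if "i \<le> CARD('n)" for i
    proof -
      have "\<mu> ^ (CARD('n) - i) * ?q ((\<Psi> ^^ i) v) \<le> ?q ((\<Psi> ^^ (CARD('n) - i)) ((\<Psi> ^^ i) v))"
        by (rule bound_funpow)
      also have "\<dots> = 0"
        using \<open>?q ((\<Psi> ^^ CARD('n)) v) = 0\<close> that
        by (metis funpow_add le_add_diff_inverse2 o_apply)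
      finally show ?thesis
        using \<mu> positive_map_funpow_lorentz_cone[OF pos] v lorentz_cone_iff
        by (metis DiffD1 mult_le_0_iff order.antisym zero_less_power not_less)
    qed
    have "\<forall>j<DIM(real^'n::{finite,wellorder}). (\<Psi> ^^ j) v \<in> K"
      using null[of "Suc _"] null by (auto simp: K_def)
    then have in_K: "(\<Psi> ^^ j) v \<in> K" for j
      using funpow_in_subspace_if_first_dim[OF lin \<open>subspace K\<close>] by blast
    have "?q ((\<Psi> ^^ j) v) = 0" for j
    proof (induction j)
      case (Suc j)
      then show ?case using in_K[of j] unfolding K_def by simp
    qed (use null[of 0] in simp)
    then show False
      using N v strictly_positive_funpow_iff[OF pos] by (metis less_irrefl)
  qed
qed

lemma primitivity_index_le:
  "k \<ge> 1 \<Longrightarrow> strictly_positive_map (\<Psi> ^^ k) \<Longrightarrow> primitivity_index \<Psi> \<le> k"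
  unfolding primitivity_index_def by (rule Least_le) simp

lemma primitivity_index_eqI:
  assumes "k \<ge> 1" "strictly_positive_map (\<Psi> ^^ k)"
    and "\<And>j. 1 \<le> j \<Longrightarrow> j < k \<Longrightarrow> \<not> strictly_positive_map (\<Psi> ^^ j)"
  shows "primitivity_index \<Psi> = k"
  unfolding primitivity_index_def using assms by (intro Least_equality) (auto simp: not_less[symmetric])

lemma primitivity_index_le_card:
  fixes \<Psi> :: "real^'n::{finite,wellorder} \<Rightarrow> real^'n::{finite,wellorder}"
  assumes lin: "linear \<Psi>" and prim: "primitive_map \<Psi>"
  shows "primitivity_index \<Psi> \<le> CARD('n)"
proof -
  have pos: "positive_map \<Psi>" using prim unfolding primitive_map_def by blast
  obtain N where N: "N \<ge> 1" "strictly_positive_map (\<Psi> ^^ N)"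
    using prim unfolding primitive_map_def by blast
  obtain \<mu> where \<mu>: "\<mu> \<ge> 0" "\<And>x. minkowski_form (\<Psi> x) \<ge> \<mu> * minkowski_form x"
    using positive_map_minkowski_form_lower_bound[OF lin pos] by blast
  have card: "CARD('n) \<ge> 1" by (simp add: Suc_leI)
  show ?thesis
  proof (cases "\<mu> = 0")
    case True
    then have "strictly_positive_map (\<Psi> ^^ 1)"
      using strictly_positive_if_minkowski_form_image_nonneg[OF lin pos N] \<mu>(2) by simp
    then have "primitivity_index \<Psi> \<le> 1" by (intro primitivity_index_le) simp_all
    then show ?thesis using card by linarith
  next
    case False
    with \<mu> have "strictly_positive_map (\<Psi> ^^ CARD('n))"
      by (intro strictly_positive_funpow_card_if_form_bound_pos[OF lin pos N(2)]) auto
    with card show ?thesis by (rule primitivity_index_le)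
  qed
qed

locale spatial_enumeration =
  fixes e :: "nat \<Rightarrow> 'n::{finite,wellorder}" and d :: nat
  assumes bij: "bij_betw e {..<Suc d} (UNIV - {last_idx})"
begin

lemma card_eq: "CARD('n) = Suc (Suc d)"
  using bij_betw_same_card[OF bij] by (simp add: card_Diff_singleton)

lemma enum_neq_last: "r < Suc d \<Longrightarrow> e r \<noteq> last_idx"
  using bij_betw_apply[OF bij] by auto

lemma enum_inj: "r < Suc d \<Longrightarrow> r' < Suc d \<Longrightarrow> e r = e r' \<longleftrightarrow> r = r'"
  using bij_betw_imp_inj_on[OF bij] unfolding inj_on_def by auto

lemma enum_surj: "i \<noteq> last_idx \<Longrightarrow> \<exists>r<Suc d. i = e r"
  using bij unfolding bij_betw_def by auto

lemma spatial_sq_enum: "spatial_sq x = (\<Sum>r<Suc d. (x $ e r)^2)"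
  unfolding spatial_sq_def using sum.reindex_bij_betw[OF bij, of "\<lambda>i. (x $ i)^2"] by simp

definition cascade_coord :: "real^'n::{finite,wellorder} \<Rightarrow> nat \<Rightarrow> real" where
  "cascade_coord x r = (if r = 0 then x $ e 0 - x $ last_idx else x $ e r)"

definition cascade_map :: "real^'n::{finite,wellorder} \<Rightarrow> real^'n::{finite,wellorder}" where
  "cascade_map x = (\<chi> i.
     if i = last_idx then (3 * x $ last_idx - x $ e 0) / 2
     else if i = e 0 then - (x $ last_idx + x $ e 0) / 2
     else cascade_coord x (inv_into {..<Suc d} e i - 1))"

lemma cascade_map_last: "cascade_map x $ last_idx = (3 * x $ last_idx - x $ e 0) / 2"
  unfolding cascade_map_def by simp

lemma cascade_map_first: "cascade_map x $ e 0 = - (x $ last_idx + x $ e 0) / 2"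
  unfolding cascade_map_def using enum_neq_last[of 0] by simp

lemma cascade_map_Suc: "r < d \<Longrightarrow> cascade_map x $ e (Suc r) = cascade_coord x r"
  unfolding cascade_map_def using enum_neq_last[of "Suc r"] enum_inj[of "Suc r" 0]
    inv_into_f_f[OF bij_betw_imp_inj_on[OF bij], of "Suc r"] by simp

lemma cascade_coord_map_0: "cascade_coord (cascade_map x) 0 = - 2 * x $ last_idx"
  unfolding cascade_coord_def cascade_map_first cascade_map_last by (simp add: field_simps)

lemma cascade_coord_map_Suc: "r < d \<Longrightarrow> cascade_coord (cascade_map x) (Suc r) = cascade_coord x r"
  using cascade_map_Suc unfolding cascade_coord_def[of "cascade_map x"] by simp

lemma linear_cascade_map: "linear cascade_map"
  by (rule linearI)
    (auto simp: vec_eq_iff cascade_map_def cascade_coord_def algebra_simps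
      diff_divide_distrib add_divide_distrib)


text \<open>On the plane of \<open>x\<^sub>n\<close> and \<open>x $ e 0\<close> the map raises the Minkowski form by
  \<open>(x $ e 0 - x\<^sub>n)\<^sup>2\<close>, which is cancelled by the new coordinate \<open>x $ e 1 = x $ e 0 - x\<^sub>n\<close>;
  the remaining spatial coordinates shift by one, and only the one pushed out,
  \<open>cascade_coord x d\<close>, changes the form.\<close>

lemma minkowski_form_cascade_map:
  "minkowski_form (cascade_map x) = minkowski_form x + (cascade_coord x d)^2"
proof -
  let ?t = "x $ last_idx" and ?z = "\<lambda>r. x $ e r"
  have "(\<Sum>r<Suc d. (cascade_coord x r)^2) = (?z 0 - ?t)^2 + (\<Sum>r<d. (?z (Suc r))^2)"
    unfolding sum.lessThan_Suc_shift by (simp add: cascade_coord_def)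
  moreover have "spatial_sq (cascade_map x)
      = (?t + ?z 0)^2 / 4 + (\<Sum>r<d. (cascade_coord x r)^2)"
    unfolding spatial_sq_enum sum.lessThan_Suc_shift
    by (simp add: cascade_map_first cascade_map_Suc power_divide power2_eq_square algebra_simps)
  moreover have "spatial_sq x = (?z 0)^2 + (\<Sum>r<d. (?z (Suc r))^2)"
    unfolding spatial_sq_enum sum.lessThan_Suc_shift ..
  ultimately show ?thesis
    unfolding minkowski_form_def cascade_map_last
    by (simp add: power2_eq_square field_simps)
qed

lemma minkowski_form_cascade_funpow:
  "minkowski_form ((cascade_map ^^ k) x)
     = minkowski_form x + (\<Sum>j<k. (cascade_coord ((cascade_map ^^ j) x) d)^2)"
  by (induction k) (simp_all add: minkowski_form_cascade_map)

lemma positive_map_cascade: "positive_map cascade_map"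
  unfolding positive_map_def
proof clarify
  fix x :: "real^'n::{finite,wellorder}" assume x: "x \<in> lorentz_cone"
  then have "(x $ e 0)^2 \<le> (x $ last_idx)^2"
    using member_le_sum[of 0 "{..<Suc d}" "\<lambda>r. (x $ e r)^2"]
    unfolding lorentz_cone_iff minkowski_form_def spatial_sq_enum by simp
  then have "\<bar>x $ e 0\<bar> \<le> x $ last_idx"
    using x lorentz_cone_iff abs_le_square_iff by (metis abs_of_nonneg)
  then show "cascade_map x \<in> lorentz_cone"
    using x unfolding lorentz_cone_iff minkowski_form_cascade_map cascade_map_last by auto
qed


lemma cascade_coord_funpow: "j \<le> d \<Longrightarrow> cascade_coord ((cascade_map ^^ j) x) d = cascade_coord x (d - j)"
proof (induction j arbitrary: x)
  case (Suc j)
  then have "cascade_coord ((cascade_map ^^ Suc j) x) d = cascade_coord (cascade_map x) (Suc (d - Suc j))"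
    by (simp add: funpow_swap1 Suc_diff_Suc)
  also have "\<dots> = cascade_coord x (d - Suc j)"
    using Suc.prems by (intro cascade_coord_map_Suc) simp
  finally show ?case .
qed simp

lemma cascade_coord_funpow_Suc:
  "cascade_coord ((cascade_map ^^ Suc d) x) d = - 2 * x $ last_idx"
  using cascade_coord_funpow[of d "cascade_map x"] by (simp add: funpow_swap1 cascade_coord_map_0)

lemma cascade_coords_eq_0_imp_eq_0:
  assumes "\<forall>j<Suc (Suc d). cascade_coord ((cascade_map ^^ j) x) d = 0"
  shows "x = 0"
proof -
  have coord: "cascade_coord x r = 0" if "r \<le> d" for r
    using assms[rule_format, of "d - r"] cascade_coord_funpow[of "d - r" x] that by simp
  have last: "x $ last_idx = 0"
    using assms[rule_format, of "Suc d"] cascade_coord_funpow_Suc[of x] by simp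
  have "x $ e r = 0" if "r < Suc d" for r
    using coord[of r] last that unfolding cascade_coord_def by (auto split: if_splits)
  then show "x = 0"
    using last enum_surj unfolding vec_eq_iff by (metis zero_index)
qed

lemma strictly_positive_cascade_funpow: "strictly_positive_map (cascade_map ^^ Suc (Suc d))"
  unfolding strictly_positive_funpow_iff[OF positive_map_cascade]
proof (rule ballI, rule ccontr)
  fix x assume x: "x \<in> lorentz_cone - {0}"
    and "\<not> minkowski_form ((cascade_map ^^ Suc (Suc d)) x) > 0"
  then have "minkowski_form x + (\<Sum>j<Suc (Suc d). (cascade_coord ((cascade_map ^^ j) x) d)^2) \<le> 0"
    unfolding minkowski_form_cascade_funpow by simp
  moreover have "minkowski_form x \<ge> 0" using x lorentz_cone_iff by blast
  ultimately have "(\<Sum>j<Suc (Suc d). (cascade_coord ((cascade_map ^^ j) x) d)^2) = 0"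
    by (smt (verit) sum_nonneg zero_le_power2)
  then have "\<forall>j<Suc (Suc d). cascade_coord ((cascade_map ^^ j) x) d = 0"
    by (subst (asm) sum_nonneg_eq_0_iff) auto
  then have "x = 0" by (rule cascade_coords_eq_0_imp_eq_0)
  then show False using x by simp
qed

lemma not_strictly_positive_cascade_funpow:
  assumes "k \<le> Suc d"
  shows "\<not> strictly_positive_map (cascade_map ^^ k)"
proof -
  \<comment> \<open>the null vector \<open>x\<^sub>n = x $ e 0 = 1\<close> is a common zero of all \<open>cascade_coord \<cdot> r\<close>\<close>
  define x :: "real^'n::{finite,wellorder}" where "x = axis last_idx 1 + axis (e 0) 1"
  have x_enum: "x $ e r = (if r = 0 then 1 else 0)" if "r < Suc d" for r
    using that enum_neq_last[OF that] enum_inj[OF that, of 0] by (simp add: x_def axis_def)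
  have x_last: "x $ last_idx = 1"
    using enum_neq_last[of 0] by (simp add: x_def axis_def)
  have x_null: "minkowski_form x = 0"
    unfolding minkowski_form_def spatial_sq_enum x_last sum.lessThan_Suc_shift
    using x_enum by simp
  have "cascade_coord ((cascade_map ^^ j) x) d = 0" if "j < k" for j
    using that assms cascade_coord_funpow[of j x] x_enum[of "d - j"] x_enum[of 0] x_last
    by (simp add: cascade_coord_def)
  then have "minkowski_form ((cascade_map ^^ k) x) = 0"
    unfolding minkowski_form_cascade_funpow x_null by simp
  moreover have "x \<in> lorentz_cone - {0}"
    using x_null x_last lorentz_cone_iff[of x] by auto
  ultimately show ?thesis
    unfolding strictly_positive_funpow_iff[OF positive_map_cascade] by force
qed

lemma primitivity_index_cascade:
  "linear cascade_map \<and> primitive_map cascade_map \<and> primitivity_index cascade_map = CARD('n)"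
proof -
  have card_pos: "CARD('n) \<ge> 1" and sp: "strictly_positive_map (cascade_map ^^ CARD('n))"
    using strictly_positive_cascade_funpow by (simp_all only: card_eq)
  have "primitivity_index cascade_map = CARD('n)"
    using not_strictly_positive_cascade_funpow
    by (intro primitivity_index_eqI[OF card_pos sp]) (simp add: card_eq)
  moreover have "primitive_map cascade_map"
    unfolding primitive_map_def using positive_map_cascade card_pos sp by blast
  ultimately show ?thesis using linear_cascade_map by blast
qed

end

lemma strictly_positive_map_id_card_1:
  assumes "CARD('n::{finite,wellorder}) = 1"
  shows "strictly_positive_map (id :: real^'n::{finite,wellorder} \<Rightarrow> real^'n::{finite,wellorder})"
proof -
  have UNIV: "UNIV = {last_idx :: 'n::{finite,wellorder}}" using assms by (metis card_1_singletonE singletonD UNIV_I)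
  have "minkowski_form x > 0" if "x \<in> lorentz_cone" "x \<noteq> (0 :: real^'n::{finite,wellorder})" for x
  proof -
    have "x $ last_idx \<noteq> 0"
      using that(2) UNIV by (metis singletonD UNIV_I vec_eq_iff zero_index)
    then show ?thesis unfolding minkowski_form_def spatial_sq_def UNIV by simp
  qed
  then show ?thesis unfolding strictly_positive_map_def using lorentz_cone_interior_iff by auto
qed

lemma exists_primitive_map_index_card:
  "\<exists>\<Psi> :: real^'n::{finite,wellorder} \<Rightarrow> real^'n::{finite,wellorder}.
     linear \<Psi> \<and> primitive_map \<Psi> \<and> primitivity_index \<Psi> = CARD('n)"
proof (cases "CARD('n) = 1")
  case True
  then have sp: "strictly_positive_map (id ^^ 1 :: real^'n::{finite,wellorder} \<Rightarrow> real^'n::{finite,wellorder})"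
    using strictly_positive_map_id_card_1 by simp
  then have "primitivity_index (id :: real^'n::{finite,wellorder} \<Rightarrow> real^'n::{finite,wellorder}) = 1"
    by (intro primitivity_index_eqI) simp_all
  moreover have "primitive_map (id :: real^'n::{finite,wellorder} \<Rightarrow> real^'n::{finite,wellorder})"
    unfolding primitive_map_def positive_map_def using sp by auto
  ultimately show ?thesis using True by (intro exI[of _ id]) (simp add: linear_iff)
next
  case False
  have "CARD('n) > 0" by simp
  with False obtain d where d: "CARD('n) = Suc (Suc d)"
    by (metis One_nat_def gr0_implies_Suc not0_implies_Suc)
  then have "card (UNIV - {last_idx::'n::{finite,wellorder}}) = Suc d" by (simp add: card_Diff_singleton)
  then obtain e :: "nat \<Rightarrow> 'n::{finite,wellorder}" where "bij_betw e {..<Suc d} (UNIV - {last_idx})"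
    using ex_bij_betw_nat_finite[of "UNIV - {last_idx::'n::{finite,wellorder}}"] by (auto simp: atLeast0LessThan)
  then interpret spatial_enumeration e d by unfold_locales
  show ?thesis using primitivity_index_cascade by blast
qed

theorem theorem1:
  shows "(\<forall>\<Psi> :: real^('n::{finite,wellorder}) \<Rightarrow> real^('n::{finite,wellorder}).
            linear \<Psi> \<and> primitive_map \<Psi> \<longrightarrow> primitivity_index \<Psi> \<le> CARD('n::{finite,wellorder}))
       \<and> (\<exists>\<Psi> :: real^('n::{finite,wellorder}) \<Rightarrow> real^('n::{finite,wellorder}).
            linear \<Psi> \<and> primitive_map \<Psi> \<and> primitivity_index \<Psi> = CARD('n::{finite,wellorder}))"
  using primitivity_index_le_card exists_primitive_map_index_card by blast

end
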